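(* Let $(\alpha,\beta)=(\alpha_0,\beta_0)\in\Delta_K$, $(\alpha_n,\beta_n)=T^n(\alpha,\beta)$, and $n\in\mathbb{Z}_{\ge0}$. Write $\varepsilon(\alpha_n,\beta_n)=(i',j')$ and let $k\in\{0,1,2\}$ be the unique element with $k\ne i'$, $k\ne j'$. Then $\varepsilon(\alpha_{n+1},\beta_{n+1})\neq(i',k)$ and $\varepsilon(\alpha_{n+1},\beta_{n+1})\neq(k,i')$. (Equivalently, the following 12 two-letter words never occur as $\varepsilon(\alpha_n,\beta_n)\varepsilon(\alpha_{n+1},\beta_{n+1})$: $(1,2)$ followed by $(0,1)$ or $(1,0)$; $(2,1)$ followed by $(0,2)$ or $(2,0)$; $(0,1)$ followed by $(0,2)$ or $(2,0)$; $(1,0)$ followed by $(1,2)$ or $(2,1)$; $(0,2)$ followed by $(0,1)$ or $(1,0)$; $(2,0)$ followed by $(1,2)$ or $(2,1)$.)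
   Context: Let $K\subset\mathbb{R}$ be a real cubic number field, $N=N_{K/\mathbb{Q}}$ its norm. Fix $r=p/q$ with $p,q$ positive coprime integers and $3\nmid p$. Let $\Delta_K=\{(\alpha,\beta)\in K^2:\ 1,\alpha,\beta \text{ linearly independent over }\mathbb{Q},\ \alpha,\beta>0,\ \alpha+\beta<1\}$ and $Ind=\{(i,j): i,j\in\{0,1,2\},\ i\neq j\}$. Let $\Delta=\{(x,y)\in\mathbb{R}^2: x,y\ge 0,\ x+y\le 1\}$ and $\triangle(1,2)=\{(x,y)\in\Delta: x\ge y\}$, $\triangle(2,1)=\{x\le y\}$, $\triangle(0,1)=\{2x+y-1\le 0\}$, $\triangle(1,0)=\{2x+y-1\ge 0\}$, $\triangle(0,2)=\{x+2y-1\le0\}$, $\triangle(2,0)=\{x+2y-1\ge 0\}$ (all subsets of $\Delta$). Maps $T_{(i,j)}:\triangle(i,j)\to\Delta$: $T_{(1,2)}(x,y)=(\frac{x-y}{1-y},\frac{y}{1-y})$, $T_{(2,1)}(x,y)=(\frac{x}{1-x},\frac{y-x}{1-x})$, $T_{(0,1)}(x,y)=(\frac{x}{1-x},\frac{y}{1-x})$, $T_{(1,0)}(x,y)=(\frac{2x+y-1}{x+y},\frac{y}{x+y})$, $T_{(0,2)}(x,y)=(\frac{x}{1-y},\frac{y}{1-y})$, $T_{(2,0)}(x,y)=(\frac{x}{x+y},\frac{x+2y-1}{x+y})$. For $(\alpha,\beta)\in\Delta_K$ put $\gamma=1-\alpha-\beta$ and $v_{\{1,2\}}=\frac{\alpha^r\beta^r}{|N(\alpha)N(\beta)|}$,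 $v_{\{0,1\}}=\frac{\alpha^r\gamma^r}{|N(\alpha)N(\gamma)|}$, $v_{\{0,2\}}=\frac{\beta^r\gamma^r}{|N(\beta)N(\gamma)|}$; the maximum is attained at a unique pair $\{i_0,j_0\}$. $\varepsilon(\alpha,\beta)$ is the ordered pair $(i,j)\in Ind$ with $\{i,j\}=\{i_0,j_0\}$ and $(\alpha,\beta)\in\triangle(i,j)$, and $T(\alpha,\beta)=T_{\varepsilon(\alpha,\beta)}(\alpha,\beta)$ (a map $\Delta_K\to\Delta_K$). *)

theory Defs
  imports Complex_Main
begin

definition rat_indep3 :: "real \<Rightarrow> real \<Rightarrow> real \<Rightarrow> bool" where
  "rat_indep3 x y z \<longleftrightarrow>
     (\<forall>a b c. a \<in> \<rat> \<and> b \<in> \<rat> \<and> c \<in> \<rat> \<and> a*x + b*y + c*z = 0 \<longrightarrow> a = 0 \<and> b = 0 \<and> c = 0)"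

definition rat_span3 :: "real \<Rightarrow> real \<Rightarrow> real \<Rightarrow> real set" where
  "rat_span3 x y z = {a*x + b*y + c*z | a b c. a \<in> \<rat> \<and> b \<in> \<rat> \<and> c \<in> \<rat>}"

definition real_cubic_field :: "real set \<Rightarrow> bool" where
  "real_cubic_field K \<longleftrightarrow>
     1 \<in> K \<and>
     (\<forall>x\<in>K. \<forall>y\<in>K. x + y \<in> K \<and> x * y \<in> K) \<and>
     (\<forall>x\<in>K. - x \<in> K) \<and>
     (\<forall>x\<in>K. x \<noteq> 0 \<longrightarrow> inverse x \<in> K) \<and>
     (\<exists>b0 b1 b2. rat_indep3 b0 b1 b2 \<and> K = rat_span3 b0 b1 b2)"

definition cf_basis :: "real set \<Rightarrow> real \<times> real \<times> real" where
  "cf_basis K = (SOME (b0, b1, b2). rat_indep3 b0 b1 b2 \<and> K = rat_span3 b0 b1 b2)"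

definition coords3 :: "real \<times> real \<times> real \<Rightarrow> real \<Rightarrow> real \<times> real \<times> real" where
  "coords3 B y = (case B of (b0, b1, b2) \<Rightarrow>
     (THE (c0, c1, c2). c0 \<in> \<rat> \<and> c1 \<in> \<rat> \<and> c2 \<in> \<rat> \<and> y = c0*b0 + c1*b1 + c2*b2))"

definition det3 :: "(nat \<Rightarrow> nat \<Rightarrow> real) \<Rightarrow> real" where
  "det3 M = M 0 0 * (M 1 1 * M 2 2 - M 1 2 * M 2 1)
          - M 0 1 * (M 1 0 * M 2 2 - M 1 2 * M 2 0)
          + M 0 2 * (M 1 0 * M 2 1 - M 1 1 * M 2 0)"

definition bvec :: "real \<times> real \<times> real \<Rightarrow> nat \<Rightarrow> real" where
  "bvec B i = (case B of (b0, b1, b2) \<Rightarrow> if i = 0 then b0 else if i = 1 then b1 else b2)"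

definition cvec :: "real \<times> real \<times> real \<Rightarrow> nat \<Rightarrow> real" where
  "cvec c j = (case c of (c0, c1, c2) \<Rightarrow> if j = 0 then c0 else if j = 1 then c1 else c2)"

text \<open>Norm N_{K/Q}(x): determinant of the Q-linear map y \<mapsto> x*y on K,
  written in the rational basis of K (independent of the basis chosen).\<close>
definition cf_norm :: "real set \<Rightarrow> real \<Rightarrow> real" where
  "cf_norm K x = (let B = cf_basis K in
     det3 (\<lambda>i j. cvec (coords3 B (x * bvec B i)) j))"

definition DeltaK :: "real set \<Rightarrow> (real \<times> real) set" where
  "DeltaK K = {(a, b). a \<in> K \<and> b \<in> K \<and> rat_indep3 1 a b \<and> a > 0 \<and> b > 0 \<and> a + b < 1}"

definition Ind :: "(nat \<times> nat) set" where
  "Ind = {(i, j). i \<in> {0,1,2} \<and> j \<in> {0,1,2} \<and> i \<noteq> j}"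

definition Delta :: "(real \<times> real) set" where
  "Delta = {(x, y). x \<ge> 0 \<and> y \<ge> 0 \<and> x + y \<le> 1}"

definition tri :: "nat \<times> nat \<Rightarrow> (real \<times> real) set" where
  "tri ij = {(x, y) \<in> Delta.
      (if ij = (1,2) then x \<ge> y
       else if ij = (2,1) then x \<le> y
       else if ij = (0,1) then 2*x + y - 1 \<le> 0
       else if ij = (1,0) then 2*x + y - 1 \<ge> 0
       else if ij = (0,2) then x + 2*y - 1 \<le> 0
       else if ij = (2,0) then x + 2*y - 1 \<ge> 0
       else False)}"

definition Tmap :: "nat \<times> nat \<Rightarrow> real \<times> real \<Rightarrow> real \<times> real" where
  "Tmap ij p = (case p of (x, y) \<Rightarrow>
      (if ij = (1,2) then ((x - y) / (1 - y), y / (1 - y))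
       else if ij = (2,1) then (x / (1 - x), (y - x) / (1 - x))
       else if ij = (0,1) then (x / (1 - x), y / (1 - x))
       else if ij = (1,0) then ((2*x + y - 1) / (x + y), y / (x + y))
       else if ij = (0,2) then (x / (1 - y), y / (1 - y))
       else if ij = (2,0) then (x / (x + y), (x + 2*y - 1) / (x + y))
       else (x, y)))"

text \<open>Coordinates: index 0 is gamma = 1 - alpha - beta, 1 is alpha, 2 is beta.\<close>
definition coordab :: "real \<times> real \<Rightarrow> nat \<Rightarrow> real" where
  "coordab p i = (case p of (a, b) \<Rightarrow> if i = 0 then 1 - a - b else if i = 1 then a else b)"

definition vval :: "real set \<Rightarrow> real \<Rightarrow> real \<times> real \<Rightarrow> nat \<Rightarrow> nat \<Rightarrow> real" where
  "vval K r p i j = (coordab p i powr r * coordab p j powr r)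
                     / \<bar>cf_norm K (coordab p i) * cf_norm K (coordab p j)\<bar>"

definition eps :: "real set \<Rightarrow> real \<Rightarrow> real \<times> real \<Rightarrow> nat \<times> nat" where
  "eps K r p = (THE (i, j). (i, j) \<in> Ind \<and>
      (\<forall>(i', j') \<in> Ind. {i', j'} \<noteq> {i, j} \<longrightarrow> vval K r p i' j' < vval K r p i j) \<and>
      p \<in> tri (i, j))"

definition Tcf :: "real set \<Rightarrow> real \<Rightarrow> real \<times> real \<Rightarrow> real \<times> real" where
  "Tcf K r p = Tmap (eps K r p) p"

end

theory Submission
  imports Defs
begin

text \<open>
  The norm of \<open>K\<close> is multiplicative and rational-valued, with \<open>N(c) = c^3\<close> for rational
  \<open>c\<close>. Hence the weight \<open>w(z) = z^r / |N z|\<close> is multiplicative, and it is injective on the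
  positive elements of \<open>K\<close>: if \<open>w x = w y\<close> with \<open>u = x / y \<noteq> 1\<close>, then \<open>u^r = |N u|\<close>,
  so \<open>u^p = s^q\<close> for the rational \<open>s = |N u|\<close>; taking norms gives \<open>s^p = u^(3p)\<close>, whence
  \<open>r = 3\<close>, contradicting \<open>3 \<not>| p\<close>.

  Since \<open>v_{i,j} = w(x_i) w(x_j)\<close> for the coordinates \<open>x = (\<gamma>, \<alpha>, \<beta>)\<close>, the pair
  \<open>\<epsilon>(P) = (i, j)\<close> is the one whose complementary index \<open>k\<close> carries the smallest weight,
  ordered so that \<open>x_j < x_i\<close>. The map \<open>T_(i,j)\<close> divides every coordinate other than \<open>x_i\<close>
  by \<open>1 - x_j\<close>, so by multiplicativity it preserves the order of their weights. In particular
  \<open>w(x_k) < w(x_j)\<close> still holds after one step, so \<open>j\<close> cannot be the index of smallest weight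
  there, which rules out \<open>(i, k)\<close> and \<open>(k, i)\<close>.
\<close>

section \<open>Rational independence of triples\<close>

lemma sum_lessThan_3: "(\<Sum>l<(3::nat). f l) = f 0 + f 1 + (f 2 :: 'a::comm_monoid_add)"
  by (simp add: eval_nat_numeral)

lemma less_3_cases: "(l::nat) < 3 \<Longrightarrow> l = 0 \<or> l = 1 \<or> l = 2"
  by auto

definition rat_indep_vec :: "(nat \<Rightarrow> real) \<Rightarrow> bool" where
  "rat_indep_vec x \<longleftrightarrow>
     (\<forall>c. (\<forall>l<3. c l \<in> \<rat>) \<and> (\<Sum>l<3. c l * x l) = 0 \<longrightarrow> (\<forall>l<3. c l = 0))"

lemma rat_indep_vecD:
  assumes "rat_indep_vec x" "\<And>l. l < 3 \<Longrightarrow> c l \<in> \<rat>" "(\<Sum>l<3. c l * x l) = 0" "l < 3"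
  shows "c l = 0"
  using assms unfolding rat_indep_vec_def by blast

lemma rat_indep3_iff_vec: "rat_indep3 (x 0) (x 1) (x 2) \<longleftrightarrow> rat_indep_vec x"
proof
  assume indep: "rat_indep3 (x 0) (x 1) (x 2)"
  show "rat_indep_vec x" unfolding rat_indep_vec_def
  proof (intro allI impI)
    fix c and l :: nat
    assume h: "(\<forall>l<3. c l \<in> \<rat>) \<and> (\<Sum>l<3. c l * x l) = 0" and l: "l < 3"
    then have "c 0 * x 0 + c 1 * x 1 + c 2 * x 2 = 0" by (simp only: sum_lessThan_3)
    moreover have "c 0 \<in> \<rat>" "c 1 \<in> \<rat>" "c 2 \<in> \<rat>" using h by simp_all
    ultimately have "c 0 = 0 \<and> c 1 = 0 \<and> c 2 = 0"
      using indep unfolding rat_indep3_def by blast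
    then show "c l = 0" using less_3_cases[OF l] by blast
  qed
next
  assume indep: "rat_indep_vec x"
  show "rat_indep3 (x 0) (x 1) (x 2)" unfolding rat_indep3_def
  proof (intro allI impI)
    fix a b c assume h: "a \<in> \<rat> \<and> b \<in> \<rat> \<and> c \<in> \<rat> \<and> a * x 0 + b * x 1 + c * x 2 = 0"
    define d where "d l = (if l = 0 then a else if l = 1 then b else c)" for l :: nat
    have "d l = 0" if "l < 3" for l
      by (rule rat_indep_vecD[where c = d, OF indep _ _ that]) (use h in \<open>simp_all add: d_def sum_lessThan_3\<close>)
    from this[of 0] this[of 1] this[of 2] show "a = 0 \<and> b = 0 \<and> c = 0" by (simp add: d_def)
  qed
qed

lemma rat_indep_vec_cong:
  assumes "\<And>l. l < 3 \<Longrightarrow> x l = y l"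
  shows "rat_indep_vec x \<longleftrightarrow> rat_indep_vec y"
proof -
  have "(\<Sum>l<3. c l * x l) = (\<Sum>l<3. c l * y l)" for c
    using assms by (intro sum.cong) auto
  then show ?thesis unfolding rat_indep_vec_def by simp
qed

lemma rat_indep_vec_unique:
  assumes "rat_indep_vec x" "\<And>l. l < 3 \<Longrightarrow> c l \<in> \<rat>" "\<And>l. l < 3 \<Longrightarrow> d l \<in> \<rat>"
    and "(\<Sum>l<3. c l * x l) = (\<Sum>l<3. d l * x l)" "l < 3"
  shows "c l = d l"
proof -
  have sum: "(\<Sum>l<3. (c l - d l) * x l) = 0"
    using assms(4) by (simp add: left_diff_distrib sum_subtractf)
  have "c l - d l = 0"
    by (rule rat_indep_vecD[where c = "\<lambda>l. c l - d l", OF assms(1) _ sum assms(5)])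
      (simp add: assms(2,3))
  then show ?thesis by simp
qed

lemma rat_indep_vec_distinct:
  assumes "rat_indep_vec x" "l < 3" "m < 3" "l \<noteq> m"
  shows "x l \<noteq> x m"
proof
  assume eq: "x l = x m"
  define c :: "nat \<Rightarrow> real" where "c n = of_bool (n = l) - of_bool (n = m)" for n
  have "c n * x n = (if n = l then x l else 0) - (if n = m then x m else 0)" for n
    by (simp add: c_def algebra_simps)
  then have sum: "(\<Sum>n<3. c n * x n) = 0"
    using assms(2,3) eq by (simp add: sum_subtractf)
  have "c l = 0" by (rule rat_indep_vecD[OF assms(1) _ sum assms(2)]) (simp add: c_def)
  then show False using assms(4) by (simp add: c_def)
qed

lemma rat_indep_vec_divide:
  assumes "rat_indep_vec x" "d \<noteq> 0"
  shows "rat_indep_vec (\<lambda>l. x l / d)"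
  using assms unfolding rat_indep_vec_def by (simp add: sum_divide_distrib[symmetric])

lemma rat_indep_vec_add_multiple:
  assumes indep: "rat_indep_vec x" and t: "t \<in> \<rat>" and ij: "i < 3" "j < 3" "i \<noteq> j"
  shows "rat_indep_vec (\<lambda>l. if l = i then x i + t * x j else x l)"
  unfolding rat_indep_vec_def
proof (intro allI impI)
  fix c and l :: nat
  assume h: "(\<forall>l<3. c l \<in> \<rat>) \<and> (\<Sum>l<3. c l * (if l = i then x i + t * x j else x l)) = 0"
    and l: "l < 3"
  define d where "d l = c l + (if l = j then t * c i else 0)" for l
  have "d l * x l = c l * x l + (if l = j then t * c i * x j else 0)"
    and "c l * (if l = i then x i + t * x j else x l) = c l * x l + (if l = i then t * c i * x j else 0)"
    for l
    by (simp_all add: d_def algebra_simps)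
  then have sum: "(\<Sum>l<3. d l * x l) = 0"
    using ij h by (simp add: sum.distrib)
  have d0: "d l = 0" if "l < 3" for l
    by (rule rat_indep_vecD[OF indep _ sum that]) (use h ij t in \<open>simp add: d_def\<close>)
  then have "c i = 0" using ij d0[OF ij(1)] by (simp add: d_def)
  then show "c l = 0" using d0[OF l] by (auto simp: d_def split: if_splits)
qed

lemma rat_indep_vec_add_multiple_iff:
  assumes "t \<in> \<rat>" "i < 3" "j < 3" "i \<noteq> j"
  shows "rat_indep_vec (\<lambda>l. if l = i then x i + t * x j else x l) \<longleftrightarrow> rat_indep_vec x"
proof
  assume "rat_indep_vec (\<lambda>l. if l = i then x i + t * x j else x l)"
  from rat_indep_vec_add_multiple[OF this _ assms(2-4), of "- t"] assms(1,4)
  have "rat_indep_vec (\<lambda>l. if l = i then x i else x l)" by (simp add: if_distrib cong: if_cong)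
  moreover have "(\<lambda>l. if l = i then x i else x l) = x" by auto
  ultimately show "rat_indep_vec x" by simp
qed (rule rat_indep_vec_add_multiple[OF _ assms])

section \<open>The norm of a real cubic field\<close>

lemma cvec_triple: "j < 3 \<Longrightarrow> cvec (f 0, f 1, f 2) j = f j"
  unfolding cvec_def using less_3_cases[of j] by auto

lemma coords3_eq:
  assumes indep: "rat_indep_vec (bvec B)" and d: "\<And>l. l < 3 \<Longrightarrow> d l \<in> \<rat>"
    and y: "y = (\<Sum>l<3. d l * bvec B l)"
  shows "coords3 B y = (d 0, d 1, d 2)"
proof -
  obtain b0 b1 b2 where B: "B = (b0, b1, b2)" by (cases B)
  let ?P = "\<lambda>(c0, c1, c2). c0 \<in> \<rat> \<and> c1 \<in> \<rat> \<and> c2 \<in> \<rat> \<and> y = c0 * b0 + c1 * b1 + c2 * b2"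
  have "(THE c. ?P c) = (d 0, d 1, d 2)"
  proof (rule the_equality)
    show "?P (d 0, d 1, d 2)" using d y B by (simp add: sum_lessThan_3 bvec_def)
  next
    fix c assume "?P c"
    then obtain c0 c1 c2 where c: "c = (c0, c1, c2)" and P: "?P (c0, c1, c2)" by (cases c) auto
    define c' where "c' l = (if l = 0 then c0 else if l = 1 then c1 else c2)" for l :: nat
    have c'Q: "c' l \<in> \<rat>" if "l < 3" for l using P by (simp add: c'_def)
    have sum: "(\<Sum>l<3. c' l * bvec B l) = (\<Sum>l<3. d l * bvec B l)"
      using P B y by (simp add: c'_def sum_lessThan_3 bvec_def)
    have "c' l = d l" if "l < 3" for l
      by (rule rat_indep_vec_unique[OF indep c'Q d sum that])
    from this[of 0] this[of 1] this[of 2] show "c = (d 0, d 1, d 2)" by (simp add: c c'_def)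
  qed
  then show ?thesis by (simp add: coords3_def B)
qed

lemma det3_cong: "(\<And>i j. i < 3 \<Longrightarrow> j < 3 \<Longrightarrow> A i j = B i j) \<Longrightarrow> det3 A = det3 B"
  unfolding det3_def by simp

lemma det3_mult: "det3 (\<lambda>i j. \<Sum>k<3. A i k * B k j) = det3 A * det3 B"
  unfolding det3_def sum_lessThan_3 by algebra

locale cubic_field =
  fixes K :: "real set"
  assumes real_cubic_field: "real_cubic_field K"
begin

lemma one_mem: "1 \<in> K"
  and add_mem: "x \<in> K \<Longrightarrow> y \<in> K \<Longrightarrow> x + y \<in> K"
  and mult_mem: "x \<in> K \<Longrightarrow> y \<in> K \<Longrightarrow> x * y \<in> K"
  and uminus_mem: "x \<in> K \<Longrightarrow> - x \<in> K"
  and inverse_mem: "x \<in> K \<Longrightarrow> x \<noteq> 0 \<Longrightarrow> inverse x \<in> K"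
  using real_cubic_field unfolding real_cubic_field_def by auto

lemma diff_mem: "x \<in> K \<Longrightarrow> y \<in> K \<Longrightarrow> x - y \<in> K"
  using add_mem uminus_mem by (metis diff_conv_add_uminus)

lemma zero_mem: "0 \<in> K"
  using diff_mem[OF one_mem one_mem] by simp

lemma divide_mem: "x \<in> K \<Longrightarrow> y \<in> K \<Longrightarrow> x / y \<in> K"
  by (cases "y = 0") (simp_all add: zero_mem divide_inverse mult_mem inverse_mem)

abbreviation basis :: "nat \<Rightarrow> real" where
  "basis \<equiv> bvec (cf_basis K)"

lemma basis_indep: "rat_indep_vec basis"
  and span_basis: "K = rat_span3 (basis 0) (basis 1) (basis 2)"
proof -
  obtain b0 b1 b2 where "rat_indep3 b0 b1 b2 \<and> K = rat_span3 b0 b1 b2"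
    using real_cubic_field unfolding real_cubic_field_def by blast
  then have "\<exists>B. case B of (b0, b1, b2) \<Rightarrow> rat_indep3 b0 b1 b2 \<and> K = rat_span3 b0 b1 b2"
    by (intro exI[of _ "(b0, b1, b2)"]) simp
  then have "case cf_basis K of (b0, b1, b2) \<Rightarrow> rat_indep3 b0 b1 b2 \<and> K = rat_span3 b0 b1 b2"
    unfolding cf_basis_def by (rule someI_ex)
  then have "rat_indep3 (basis 0) (basis 1) (basis 2) \<and> K = rat_span3 (basis 0) (basis 1) (basis 2)"
    by (cases "cf_basis K") (simp add: bvec_def)
  then show "rat_indep_vec basis" "K = rat_span3 (basis 0) (basis 1) (basis 2)"
    using rat_indep3_iff_vec[of basis] by blast+
qed

lemma basis_expansion:
  assumes "y \<in> K"
  obtains d where "\<And>l. d l \<in> \<rat>" "y = (\<Sum>l<3. d l * basis l)"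
proof -
  from assms obtain a b c
    where "a \<in> \<rat>" "b \<in> \<rat>" "c \<in> \<rat>" "y = a * basis 0 + b * basis 1 + c * basis 2"
    by (subst (asm) span_basis) (auto simp: rat_span3_def)
  then show ?thesis
    by (intro that[of "\<lambda>l. if l = 0 then a else if l = 1 then b else c"]) (simp_all add: sum_lessThan_3)
qed

lemma basis_mem: "basis i \<in> K"
proof -
  have span: "a * basis 0 + b * basis 1 + c * basis 2 \<in> K" if "a \<in> \<rat>" "b \<in> \<rat>" "c \<in> \<rat>" for a b c
    using that by (subst span_basis) (auto simp: rat_span3_def)
  have "basis i = 0 * basis 0 + 0 * basis 1 + 1 * basis 2 \<or> basis i = 0 * basis 0 + 1 * basis 1 + 0 * basis 2
      \<or> basis i = 1 * basis 0 + 0 * basis 1 + 0 * basis 2"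
    by (cases "cf_basis K") (simp add: bvec_def)
  then show ?thesis using span by (metis Rats_0 Rats_1)
qed

definition mult_matrix :: "real \<Rightarrow> nat \<Rightarrow> nat \<Rightarrow> real" where
  "mult_matrix x i j = cvec (coords3 (cf_basis K) (x * basis i)) j"

lemma cf_norm_eq_det3: "cf_norm K x = det3 (mult_matrix x)"
  by (simp add: cf_norm_def mult_matrix_def[abs_def] Let_def)

lemma mult_matrix_eqI:
  assumes "\<And>l. l < 3 \<Longrightarrow> d l \<in> \<rat>" "x * basis i = (\<Sum>l<3. d l * basis l)" "j < 3"
  shows "mult_matrix x i j = d j"
proof -
  have "coords3 (cf_basis K) (x * basis i) = (d 0, d 1, d 2)"
    by (rule coords3_eq[OF basis_indep assms(1,2)])
  then show ?thesis unfolding mult_matrix_def using cvec_triple[of j d, OF assms(3)] by simp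
qed

lemma mult_matrix_Rats: "x \<in> K \<Longrightarrow> j < 3 \<Longrightarrow> mult_matrix x i j \<in> \<rat>"
  and basis_mult_expansion: "x \<in> K \<Longrightarrow> x * basis i = (\<Sum>l<3. mult_matrix x i l * basis l)"
proof -
  assume "x \<in> K"
  then obtain d where d: "\<And>l. d l \<in> \<rat>" "x * basis i = (\<Sum>l<3. d l * basis l)"
    using basis_expansion mult_mem basis_mem by blast
  then have M: "mult_matrix x i j = d j" if "j < 3" for j
    using mult_matrix_eqI that by blast
  show "j < 3 \<Longrightarrow> mult_matrix x i j \<in> \<rat>" using M d(1) by simp
  show "x * basis i = (\<Sum>l<3. mult_matrix x i l * basis l)" using d(2) M by simp
qed

lemma mult_matrix_mult:
  assumes x: "x \<in> K" and y: "y \<in> K" and j: "j < 3"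
  shows "mult_matrix (x * y) i j = (\<Sum>k<3. mult_matrix y i k * mult_matrix x k j)"
proof (rule mult_matrix_eqI[OF _ _ j])
  show "(\<Sum>k<3. mult_matrix y i k * mult_matrix x k l) \<in> \<rat>" if "l < 3" for l
    using x y that by (auto intro!: Rats_sum Rats_mult mult_matrix_Rats)
  have "x * y * basis i = (\<Sum>k<3. mult_matrix y i k * (x * basis k))"
    using basis_mult_expansion[OF y] by (simp add: sum_distrib_left mult_ac)
  also have "\<dots> = (\<Sum>k<3. \<Sum>l<3. mult_matrix y i k * mult_matrix x k l * basis l)"
    using basis_mult_expansion[OF x] by (simp add: sum_distrib_left mult.assoc)
  also have "\<dots> = (\<Sum>l<3. (\<Sum>k<3. mult_matrix y i k * mult_matrix x k l) * basis l)"
    by (subst sum.swap) (simp add: sum_distrib_right)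
  finally show "x * y * basis i = (\<Sum>l<3. (\<Sum>k<3. mult_matrix y i k * mult_matrix x k l) * basis l)" .
qed

lemma cf_norm_mult:
  assumes "x \<in> K" "y \<in> K"
  shows "cf_norm K (x * y) = cf_norm K x * cf_norm K y"
proof -
  have "cf_norm K (x * y) = det3 (\<lambda>i j. \<Sum>k<3. mult_matrix y i k * mult_matrix x k j)"
    unfolding cf_norm_eq_det3 by (rule det3_cong) (simp add: mult_matrix_mult assms)
  then show ?thesis by (simp add: det3_mult cf_norm_eq_det3)
qed

lemma cf_norm_of_Rats:
  assumes "c \<in> \<rat>"
  shows "cf_norm K c = c ^ 3"
proof -
  have "mult_matrix c i j = (if i = j then c else 0)" if "i < 3" "j < 3" for i j
  proof (rule mult_matrix_eqI[OF _ _ that(2)])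
    show "(if i = l then c else 0) \<in> \<rat>" for l using assms by simp
    show "c * basis i = (\<Sum>l<3. (if i = l then c else 0) * basis l)"
      using less_3_cases[OF that(1)] by (auto simp: sum_lessThan_3)
  qed
  then have "cf_norm K c = det3 (\<lambda>i j. if i = j then c else 0)"
    unfolding cf_norm_eq_det3 by (rule det3_cong)
  then show ?thesis by (simp add: det3_def power3_eq_cube)
qed

lemma cf_norm_Rats: "x \<in> K \<Longrightarrow> cf_norm K x \<in> \<rat>"
  unfolding cf_norm_eq_det3 det3_def by (simp add: mult_matrix_Rats)

lemma cf_norm_nonzero:
  assumes "x \<in> K" "x \<noteq> 0"
  shows "cf_norm K x \<noteq> 0"
proof -
  have "cf_norm K x * cf_norm K (inverse x) = cf_norm K 1"
    using cf_norm_mult[OF assms(1) inverse_mem[OF assms]] assms(2) by simp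
  also have "\<dots> = 1" using cf_norm_of_Rats[of 1] by simp
  finally show ?thesis by auto
qed

lemma cf_norm_power: "x \<in> K \<Longrightarrow> cf_norm K (x ^ n) = cf_norm K x ^ n"
proof (induction n)
  case 0
  then show ?case using cf_norm_of_Rats[of 1] by simp
next
  case (Suc n)
  have "x ^ n \<in> K" by (induction n) (simp_all add: one_mem mult_mem Suc.prems)
  then show ?case using Suc cf_norm_mult by simp
qed

end

section \<open>The weight \<open>z^r / |N z|\<close>\<close>

definition cf_weight :: "real set \<Rightarrow> real \<Rightarrow> real \<Rightarrow> real" where
  "cf_weight K r z = z powr r / \<bar>cf_norm K z\<bar>"

lemma vval_eq_cf_weight:
  "vval K r P i j = cf_weight K r (coordab P i) * cf_weight K r (coordab P j)"
  unfolding vval_def cf_weight_def by (simp add: abs_mult)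

context cubic_field
begin

lemma cf_weight_pos: "z \<in> K \<Longrightarrow> z > 0 \<Longrightarrow> cf_weight K r z > 0"
  unfolding cf_weight_def using cf_norm_nonzero[of z] by simp

lemma cf_weight_mult: "z \<in> K \<Longrightarrow> w \<in> K \<Longrightarrow> cf_weight K r (z * w) = cf_weight K r z * cf_weight K r w"
  unfolding cf_weight_def by (simp add: cf_norm_mult powr_mult abs_mult)

lemma exponent_eq_3_if_powr_eq_abs_cf_norm:
  assumes u: "u \<in> K" "u > 0" "u \<noteq> 1" and pq: "p > 0" "q > 0"
    and eq: "u powr (real p / real q) = \<bar>cf_norm K u\<bar>"
  shows "p = 3 * q"
proof -
  define s where "s = \<bar>cf_norm K u\<bar>"
  have s: "s \<in> \<rat>" "s > 0"
    unfolding s_def using cf_norm_Rats[OF u(1)] cf_norm_nonzero[OF u(1)] u(2) by auto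
  have "u ^ p = u powr (real p / real q * real q)" using u(2) pq by (simp add: powr_realpow)
  also have "\<dots> = (u powr (real p / real q)) powr real q" by (simp add: powr_powr)
  also have "\<dots> = s ^ q" using s(2) by (simp add: eq[folded s_def] powr_realpow)
  finally have up: "u ^ p = s ^ q" .
  have "s ^ p = \<bar>cf_norm K (u ^ p)\<bar>" unfolding s_def by (simp add: cf_norm_power[OF u(1)] power_abs)
  also have "\<dots> = \<bar>cf_norm K (s ^ q)\<bar>" by (simp add: up)
  also have "\<dots> = (s ^ q) ^ 3" using s by (simp add: cf_norm_of_Rats)
  also have "\<dots> = (u ^ 3) ^ p" by (metis up power_mult mult.commute)
  finally have "s = u ^ 3" using pq s(2) u(2) by (simp add: power_eq_imp_eq_base)
  then have "u powr (real p / real q) = u powr 3" using eq u(2) by (simp add: s_def powr_realpow)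
  then have "real p / real q = 3" using powr_inj[OF u(2) u(3)] by blast
  then show ?thesis using pq by (simp add: field_simps flip: of_nat_mult)
qed

lemma cf_weight_inj:
  assumes pq: "p > 0" "q > 0" "\<not> 3 dvd p"
    and x: "x \<in> K" "x > 0" and y: "y \<in> K" "y > 0"
    and eq: "cf_weight K (real p / real q) x = cf_weight K (real p / real q) y"
  shows "x = y"
proof (rule ccontr)
  assume "x \<noteq> y"
  define u where "u = x / y"
  have u: "u \<in> K" "u > 0" "u \<noteq> 1"
    unfolding u_def using divide_mem[OF x(1) y(1)] x y \<open>x \<noteq> y\<close> by auto
  have "cf_weight K (real p / real q) u * cf_weight K (real p / real q) y = cf_weight K (real p / real q) y"
    using cf_weight_mult[OF u(1) y(1)] eq y by (simp add: u_def)
  then have "cf_weight K (real p / real q) u = 1"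
    using cf_weight_pos[OF y, of "real p / real q"] by (metis mult_cancel_right2 less_irrefl)
  then have "u powr (real p / real q) = \<bar>cf_norm K u\<bar>"
    using cf_norm_nonzero[OF u(1)] u(2) by (simp add: cf_weight_def)
  then have "p = 3 * q" by (rule exponent_eq_3_if_powr_eq_abs_cf_norm[OF u pq(1,2)])
  then show False using pq(3) by simp
qed

end

section \<open>The simplex and the maps \<open>T_(i,j)\<close>\<close>

lemma all_less_3_iff: "(\<forall>l<3. P l) \<longleftrightarrow> P 0 \<and> P 1 \<and> P (2::nat)"
  using less_3_cases by auto

lemma Ind_iff: "(i, j) \<in> Ind \<longleftrightarrow> i < 3 \<and> j < 3 \<and> i \<noteq> j"
  unfolding Ind_def by auto

lemma Ind_cases:
  "(i, j) \<in> Ind \<Longrightarrow> (i, j) = (0, 1) \<or> (i, j) = (1, 0) \<or> (i, j) = (0, 2) \<or> (i, j) = (2, 0)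
    \<or> (i, j) = (1, 2) \<or> (i, j) = (2, 1)"
  unfolding Ind_def by auto

lemma rat_indep3_one_iff_coordab: "rat_indep3 1 a b \<longleftrightarrow> rat_indep_vec (coordab (a, b))"
proof -
  define v where "v l = (if l = 0 then 1 else coordab (a, b) l)" for l :: nat
  define w where "w l = (if l = 0 then v 0 + (- 1) * v 1 else v l)" for l :: nat
  have "rat_indep3 1 a b \<longleftrightarrow> rat_indep_vec v"
    using rat_indep3_iff_vec[of v] by (simp add: v_def coordab_def)
  also have "\<dots> \<longleftrightarrow> rat_indep_vec w"
    unfolding w_def by (rule rat_indep_vec_add_multiple_iff[symmetric]) simp_all
  also have "\<dots> \<longleftrightarrow> rat_indep_vec (\<lambda>l. if l = 0 then w 0 + (- 1) * w 2 else w l)"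
    by (rule rat_indep_vec_add_multiple_iff[symmetric]) simp_all
  also have "(\<lambda>l. if l = 0 then w 0 + (- 1) * w 2 else w l) = coordab (a, b)"
    by (auto simp: w_def v_def coordab_def)
  finally show ?thesis .
qed

lemma tri_iff:
  assumes "(i, j) \<in> Ind"
  shows "P \<in> tri (i, j) \<longleftrightarrow> P \<in> Delta \<and> coordab P j \<le> coordab P i"
proof (cases P)
  case (Pair a b)
  show ?thesis using Ind_cases[OF assms] unfolding Pair
    by (elim disjE) (auto simp: tri_def coordab_def)
qed

lemma coordab_Tmap:
  assumes "(i, j) \<in> Ind" "coordab P j \<noteq> 1" "l < 3"
  shows "coordab (Tmap (i, j) P) l
    = (if l = i then coordab P i - coordab P j else coordab P l) / (1 - coordab P j)"
proof -
  obtain a b where P: "P = (a, b)" by (cases P)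
  have "1 - coordab P j \<noteq> 0" using assms(2) by simp
  then show ?thesis using Ind_cases[OF assms(1)] less_3_cases[OF assms(3)] unfolding P
    by (elim disjE) (auto simp: Tmap_def coordab_def divide_simps)
qed

context cubic_field
begin

lemma DeltaK_iff:
  "P \<in> DeltaK K \<longleftrightarrow> (\<forall>l<3. coordab P l \<in> K \<and> coordab P l > 0) \<and> rat_indep_vec (coordab P)"
proof (cases P)
  case (Pair a b)
  have "(\<forall>l<3. coordab P l \<in> K \<and> coordab P l > 0) \<longleftrightarrow> a \<in> K \<and> b \<in> K \<and> a > 0 \<and> b > 0 \<and> a + b < 1"
    unfolding all_less_3_iff Pair coordab_def by (auto simp: diff_mem one_mem)
  then show ?thesis
    unfolding Pair DeltaK_def rat_indep3_one_iff_coordab by auto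
qed

lemma coordab_mem: "P \<in> DeltaK K \<Longrightarrow> l < 3 \<Longrightarrow> coordab P l \<in> K"
  and coordab_pos: "P \<in> DeltaK K \<Longrightarrow> l < 3 \<Longrightarrow> coordab P l > 0"
  and DeltaK_rat_indep: "P \<in> DeltaK K \<Longrightarrow> rat_indep_vec (coordab P)"
  by (simp_all add: DeltaK_iff)

lemma coordab_less_one:
  assumes "P \<in> DeltaK K" "l < 3"
  shows "coordab P l < 1"
proof -
  have "coordab P 0 + coordab P 1 + coordab P 2 = 1" by (cases P) (simp add: coordab_def)
  moreover have "coordab P 0 > 0" "coordab P 1 > 0" "coordab P 2 > 0"
    by (simp_all add: coordab_pos[OF assms(1)])
  ultimately show ?thesis using less_3_cases[OF assms(2)] by auto
qed

lemma DeltaK_subset_Delta: "DeltaK K \<subseteq> Delta"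
  by (auto simp: DeltaK_def Delta_def)

lemma Tmap_mem_DeltaK:
  assumes P: "P \<in> DeltaK K" and ij: "(i, j) \<in> Ind" and lt: "coordab P j < coordab P i"
  shows "Tmap (i, j) P \<in> DeltaK K"
proof -
  define z where "z l = (if l = i then coordab P i + (- 1) * coordab P j else coordab P l)" for l
  have ij3: "i < 3" "j < 3" "i \<noteq> j" using ij by (simp_all add: Ind_iff)
  have c: "1 - coordab P j > 0" using coordab_less_one[OF P ij3(2)] by simp
  have Q: "coordab (Tmap (i, j) P) l = z l / (1 - coordab P j)" if "l < 3" for l
    using coordab_Tmap[OF ij _ that] c by (simp add: z_def)
  have cK: "1 - coordab P j \<in> K" by (simp add: diff_mem one_mem coordab_mem[OF P ij3(2)])
  have "z l \<in> K" "z l > 0" if "l < 3" for l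
    using that coordab_mem[OF P] coordab_pos[OF P] lt ij3 by (auto simp: z_def diff_mem)
  then have "\<forall>l<3. coordab (Tmap (i, j) P) l \<in> K \<and> coordab (Tmap (i, j) P) l > 0"
    using Q c cK by (simp add: divide_mem)
  moreover have "rat_indep_vec (\<lambda>l. z l / (1 - coordab P j))"
    using rat_indep_vec_add_multiple[OF DeltaK_rat_indep[OF P] _ ij3, of "- 1"] c
    by (intro rat_indep_vec_divide) (simp_all add: z_def)
  then have "rat_indep_vec (coordab (Tmap (i, j) P))" using rat_indep_vec_cong[OF Q] by simp
  ultimately show ?thesis unfolding DeltaK_iff by blast
qed

end

section \<open>The choice function \<open>\<epsilon>\<close>\<close>

definition dominant_pair :: "real set \<Rightarrow> real \<Rightarrow> real \<times> real \<Rightarrow> nat \<Rightarrow> nat \<Rightarrow> bool" where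
  "dominant_pair K r P i j \<longleftrightarrow> (i, j) \<in> Ind \<and> coordab P j < coordab P i \<and>
     (\<forall>k<3. k \<noteq> i \<and> k \<noteq> j \<longrightarrow>
        cf_weight K r (coordab P k) < cf_weight K r (coordab P i) \<and>
        cf_weight K r (coordab P k) < cf_weight K r (coordab P j))"

lemma ex_ordered_pair_omitting_min:
  fixes x w :: "nat \<Rightarrow> real"
  assumes x: "inj_on x {..<3}" and w: "inj_on w {..<3}"
  shows "\<exists>i j. (i, j) \<in> Ind \<and> x j < x i \<and> (\<forall>k<3. k \<noteq> i \<and> k \<noteq> j \<longrightarrow> w k < w i \<and> w k < w j)"
proof -
  have ordered: ?thesis
    if ab: "(a, b) \<in> Ind" and min: "\<forall>k<3. k \<noteq> a \<and> k \<noteq> b \<longrightarrow> w k < w a \<and> w k < w b"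
    for a b
  proof (cases "x b < x a")
    case True
    then show ?thesis using ab min by blast
  next
    case False
    moreover have "x a \<noteq> x b" using x ab by (auto simp: Ind_iff inj_on_def)
    moreover have "(b, a) \<in> Ind" using ab by (auto simp: Ind_iff)
    ultimately show ?thesis using min by force
  qed
  have "w 0 \<noteq> w 1" "w 0 \<noteq> w 2" "w 1 \<noteq> w 2" by (simp_all add: inj_on_contraD[OF w])
  then consider "w 0 < w 1" "w 0 < w 2" | "w 1 < w 0" "w 1 < w 2" | "w 2 < w 0" "w 2 < w 1"
    by argo
  then show ?thesis
  proof cases
    case 1
    then show ?thesis by (intro ordered[of 1 2]) (auto simp: Ind_iff dest: less_3_cases)
  next
    case 2
    then show ?thesis by (intro ordered[of 0 2]) (auto simp: Ind_iff dest: less_3_cases)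
  next
    case 3
    then show ?thesis by (intro ordered[of 0 1]) (auto simp: Ind_iff dest: less_3_cases)
  qed
qed

context cubic_field
begin

lemma eps_eqI:
  assumes P: "P \<in> DeltaK K" and dominant: "dominant_pair K r P i j"
  shows "eps K r P = (i, j)"
proof -
  let ?w = "\<lambda>l. cf_weight K r (coordab P l)"
  have ij: "(i, j) \<in> Ind" and lt: "coordab P j < coordab P i"
    and min: "\<And>k. k < 3 \<Longrightarrow> k \<notin> {i, j} \<Longrightarrow> ?w k < ?w i \<and> ?w k < ?w j"
    using dominant unfolding dominant_pair_def by auto
  have pos: "?w l > 0" if "l < 3" for l
    using cf_weight_pos coordab_mem[OF P that] coordab_pos[OF P that] by blast
  have ij3: "i < 3" "j < 3" "i \<noteq> j" using ij by (simp_all add: Ind_iff)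
  have larger: "vval K r P a b < vval K r P i j" if ab: "(a, b) \<in> Ind" "{a, b} \<noteq> {i, j}" for a b
  proof -
    have ab3: "a < 3" "b < 3" "a \<noteq> b" using ab(1) by (simp_all add: Ind_iff)
    have "a \<notin> {i, j} \<and> b \<in> {i, j} \<or> b \<notin> {i, j} \<and> a \<in> {i, j}"
      using ab(2) ab3 ij3 by auto
    moreover have "?w k * ?w l < ?w i * ?w j" if "k < 3" "k \<notin> {i, j}" "l \<in> {i, j}" for k l
      using min[OF that(1,2)] that(3) pos[OF ij3(1)] pos[OF ij3(2)]
      by (auto simp: mult.commute intro: mult_strict_right_mono)
    ultimately show ?thesis using ab3 by (auto simp: vval_eq_cf_weight mult.commute)
  qed
  let ?S = "\<lambda>(i, j). (i, j) \<in> Ind \<and>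
      (\<forall>(i', j') \<in> Ind. {i', j'} \<noteq> {i, j} \<longrightarrow> vval K r P i' j' < vval K r P i j) \<and>
      P \<in> tri (i, j)"
  show ?thesis unfolding eps_def
  proof (rule the_equality)
    show "?S (i, j)" using ij larger lt DeltaK_subset_Delta P tri_iff[OF ij] by auto
  next
    fix e assume "?S e"
    moreover obtain a b where e: "e = (a, b)" by (cases e)
    ultimately have ab: "(a, b) \<in> Ind" "P \<in> tri (a, b)"
      and largest: "\<forall>(i', j')\<in>Ind. {i', j'} \<noteq> {a, b} \<longrightarrow> vval K r P i' j' < vval K r P a b"
      by auto
    have "{a, b} = {i, j}" using larger[OF ab(1)] largest ij by fastforce
    moreover have "(a, b) \<noteq> (j, i)" using ab tri_iff[of j i P] lt by (auto simp: Ind_iff)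
    ultimately show "e = (i, j)" using e by (auto simp: doubleton_eq_iff)
  qed
qed

lemma cf_weight_less_Tmap:
  assumes P: "P \<in> DeltaK K" and ij: "(i, j) \<in> Ind" and lt: "coordab P j < coordab P i"
    and lm: "l < 3" "m < 3" "l \<noteq> i" "m \<noteq> i"
    and less: "cf_weight K r (coordab P l) < cf_weight K r (coordab P m)"
  shows "cf_weight K r (coordab (Tmap (i, j) P) l) < cf_weight K r (coordab (Tmap (i, j) P) m)"
proof -
  define c where "c = inverse (1 - coordab P j)"
  have j3: "j < 3" using ij by (simp add: Ind_iff)
  have c: "c \<in> K" "c > 0"
    using coordab_less_one[OF P j3] coordab_mem[OF P j3]
    by (simp_all add: c_def inverse_mem diff_mem one_mem)
  have "cf_weight K r (coordab (Tmap (i, j) P) n) = cf_weight K r (coordab P n) * cf_weight K r c"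
    if "n < 3" "n \<noteq> i" for n
    using coordab_Tmap[OF ij _ that(1)] coordab_less_one[OF P j3] that(2)
      cf_weight_mult[OF coordab_mem[OF P that(1)] c(1)]
    by (simp add: c_def divide_inverse)
  then show ?thesis using lm less cf_weight_pos[OF c] by simp
qed

end

locale cubic_field_exponent = cubic_field +
  fixes p q :: nat
  assumes p_pos: "p > 0" and q_pos: "q > 0" and not_3_dvd_p: "\<not> 3 dvd p"
begin

abbreviation r :: real where
  "r \<equiv> real p / real q"

lemma dominant_pair_eps:
  assumes P: "P \<in> DeltaK K" and eps: "eps K r P = (i, j)"
  shows "dominant_pair K r P i j"
proof -
  have inj: "inj_on (coordab P) {..<3}"
    using rat_indep_vec_distinct[OF DeltaK_rat_indep[OF P]] by (auto simp: inj_on_def)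
  moreover have "inj_on (\<lambda>l. cf_weight K r (coordab P l)) {..<3}"
  proof (rule inj_onI)
    fix l m assume lm: "l \<in> {..<3}" "m \<in> {..<3}"
      and eq: "cf_weight K r (coordab P l) = cf_weight K r (coordab P m)"
    have "coordab P l = coordab P m"
      using cf_weight_inj[OF p_pos q_pos not_3_dvd_p _ _ _ _ eq] lm
      by (simp add: coordab_mem[OF P] coordab_pos[OF P])
    then show "l = m" using inj_onD[OF inj _ lm] by blast
  qed
  ultimately obtain i' j' where dominant: "dominant_pair K r P i' j'"
    unfolding dominant_pair_def using ex_ordered_pair_omitting_min by blast
  moreover have "eps K r P = (i', j')" by (rule eps_eqI[OF P dominant])
  ultimately show ?thesis using eps by simp
qed

lemma Tcf_mem_DeltaK:
  assumes P: "P \<in> DeltaK K"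
  shows "Tcf K r P \<in> DeltaK K"
proof -
  obtain i j where eps: "eps K r P = (i, j)" by (cases "eps K r P")
  then have "dominant_pair K r P i j" by (rule dominant_pair_eps[OF P])
  then show ?thesis unfolding Tcf_def eps dominant_pair_def using Tmap_mem_DeltaK[OF P] by blast
qed

lemma Tcf_iterate_mem_DeltaK: "P \<in> DeltaK K \<Longrightarrow> (Tcf K r ^^ n) P \<in> DeltaK K"
  by (induction n) (simp_all add: Tcf_mem_DeltaK)

lemma eps_Tcf_ne:
  assumes P: "P \<in> DeltaK K" and eps: "eps K r P = (i, j)" and k: "k < 3" "k \<noteq> i" "k \<noteq> j"
  shows "eps K r (Tcf K r P) \<noteq> (i, k) \<and> eps K r (Tcf K r P) \<noteq> (k, i)"
proof -
  have "dominant_pair K r P i j" by (rule dominant_pair_eps[OF P eps])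
  then have ij: "(i, j) \<in> Ind" and lt: "coordab P j < coordab P i"
    and "cf_weight K r (coordab P k) < cf_weight K r (coordab P j)"
    using k unfolding dominant_pair_def by auto
  then have less: "cf_weight K r (coordab (Tcf K r P) k) < cf_weight K r (coordab (Tcf K r P) j)"
    unfolding Tcf_def eps using ij k by (intro cf_weight_less_Tmap[OF P ij lt]) (auto simp: Ind_iff)
  obtain a b where eps': "eps K r (Tcf K r P) = (a, b)" by (cases "eps K r (Tcf K r P)")
  have "dominant_pair K r (Tcf K r P) a b" by (rule dominant_pair_eps[OF Tcf_mem_DeltaK[OF P] eps'])
  then have "cf_weight K r (coordab (Tcf K r P) j) < cf_weight K r (coordab (Tcf K r P) k)"
    if "{a, b} = {i, k}"
    using ij k that unfolding dominant_pair_def by (auto simp: Ind_iff)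
  then show ?thesis using less eps' by auto
qed

end

theorem theorem2p6:
  fixes K :: "real set" and p q n :: nat and \<alpha> \<beta> :: real
  assumes "real_cubic_field K"
    and "p > 0" and "q > 0" and "coprime p q" and "\<not> 3 dvd p"
    and "(\<alpha>, \<beta>) \<in> DeltaK K"
  shows "let r = real p / real q;
             e = eps K r ((Tcf K r ^^ n) (\<alpha>, \<beta>));
             e' = eps K r ((Tcf K r ^^ Suc n) (\<alpha>, \<beta>))
         in \<forall>k \<in> {0,1,2}. k \<noteq> fst e \<and> k \<noteq> snd e \<longrightarrow>
              e' \<noteq> (fst e, k) \<and> e' \<noteq> (k, fst e)"
proof -
  interpret cubic_field_exponent K p q
    using assms by unfold_locales
  have P: "(Tcf K r ^^ n) (\<alpha>, \<beta>) \<in> DeltaK K" by (rule Tcf_iterate_mem_DeltaK[OF assms(6)])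
  obtain i j where eps: "eps K r ((Tcf K r ^^ n) (\<alpha>, \<beta>)) = (i, j)"
    by (cases "eps K r ((Tcf K r ^^ n) (\<alpha>, \<beta>))")
  show ?thesis unfolding Let_def funpow.simps(2) o_apply eps fst_conv snd_conv
  proof (intro ballI impI)
    fix k :: nat assume "k \<in> {0, 1, 2}" "k \<noteq> i \<and> k \<noteq> j"
    then show "eps K r (Tcf K r ((Tcf K r ^^ n) (\<alpha>, \<beta>))) \<noteq> (i, k) \<and>
        eps K r (Tcf K r ((Tcf K r ^^ n) (\<alpha>, \<beta>))) \<noteq> (k, i)"
      by (intro eps_Tcf_ne[OF P eps]) auto
  qed
qed

end
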